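(* Let $\mathcal{B}(\Omega)$ be a Bergman-type space with Rudin–Forelli constant $\kappa$, and let $Pf(z)=\int_\Omega\langle K_w,K_z\rangle f(w)\,d\sigma(w)$. (a) If $\kappa=0$, then $P$ is bounded on $L^p\big(\Omega;\|K_w\|^{-p}d\lambda(w)\big)$ for all $1\le p\le\infty$ (for $p=\infty$ this means the weighted sup-norm $\sup_w|f(w)|/\|K_w\|$). (b) If $\kappa>0$, then $P$ is bounded on $L^p(\Omega;d\sigma)$ for all $1<p<\infty$.
   Context: Notation: $A\lesssim B$ means $A\le CB$ for a constant $C$ independent of the relevant variables; $A\simeq B$ means $A\lesssim B$ and $B\lesssim A$. Bergman-type space: $\Omega\subset\mathbb{C}^n$ is a domain containing $0$ such that: (A.1) for each $z\in\Omega$ there is an involutive biholomorphic automorphism $\varphi_z$ of $\Omega$ with $\varphi_z(0)=z$; (A.2) there is a metric $d$ on $\Omega$ with $d(u,v)\simeq d(\varphi_z(u),\varphi_z(v))$ uniformly in $u,v,z$; $(\Omega,d)$ is separable and every closed $d$-ball is compact; $D(z,r)$ denotes the $d$-ball of center $z$ and radius $r$; (A.3) $\sigma$ is a finite Borel measure on $\Omega$, $\mathcal{B}(\Omega)$ is the space of holomorphic functions on $\Omega$ lying in $L^2(\Omega;d\sigma)$ with the $L^2(\sigma)$ norm $\|\cdot\|$ and inner product $\langle\cdot,\cdot\rangle$; $\mathcal{B}(\Omega)$ is a reproducing kernel Hilbert space with reproducing kernel $K_z$ ($f(z)=\langle f,K_z\rangle$) and normalized kernel $k_z=K_z/\|K_z\|$;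 $z\mapsto\|K_z\|$ is continuous on $(\Omega,d)$; (A.4) the measure $d\lambda(z):=\|K_z\|^2d\sigma(z)$ satisfies $\lambda(E)\simeq\lambda(\varphi_z(E))$ for Borel $E$, uniformly in $z$, and is doubling: $\lambda(D(z,2r))\le C\lambda(D(z,r))$ for all $z,r>0$; (A.5) $|\langle k_z,k_w\rangle|\simeq 1/\|K_{\varphi_z(w)}\|$ uniformly in $z,w$; (A.6) (Rudin–Forelli estimates) there is a constant $\kappa\in[0,2)$ such that, if $\kappa>0$, for all $r>\kappa>s>0$ one has $\sup_{z\in\Omega}\int_\Omega \frac{|\langle K_z,K_w\rangle|^{(r+s)/2}}{\|K_z\|^s\|K_w\|^r}d\lambda(w)<\infty$, and if $\kappa=0$ this holds for all $r=s>0$; (A.7) $\|K_z\|\to\infty$ as $d(z,0)\to\infty$. *)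

theory Defs
  imports "HOL-Analysis.Analysis"
begin

definition holo_fun :: "(complex ^ 'n) set \<Rightarrow> (complex ^ 'n \<Rightarrow> complex) \<Rightarrow> bool" where
  "holo_fun \<Omega> f \<longleftrightarrow> open \<Omega> \<and> (\<forall>z\<in>\<Omega>. \<exists>L. (f has_derivative L) (at z) \<and>
      (\<forall>c v. L (c *s v) = c * L v))"

definition holo_map :: "(complex ^ 'n) set \<Rightarrow> (complex ^ 'n \<Rightarrow> complex ^ 'm) \<Rightarrow> bool" where
  "holo_map \<Omega> F \<longleftrightarrow> open \<Omega> \<and> (\<forall>z\<in>\<Omega>. \<exists>L. (F has_derivative L) (at z) \<and>
      (\<forall>c v. L (c *s v) = c *s L v))"

definition ip :: "'a measure \<Rightarrow> ('a \<Rightarrow> complex) \<Rightarrow> ('a \<Rightarrow> complex) \<Rightarrow> complex" where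
  "ip \<sigma> f g = (LINT w|\<sigma>. f w * cnj (g w))"

definition l2norm :: "'a measure \<Rightarrow> ('a \<Rightarrow> complex) \<Rightarrow> real" where
  "l2norm \<sigma> f = sqrt (LINT w|\<sigma>. (cmod (f w))\<^sup>2)"

definition bspace :: "(complex ^ 'n) set \<Rightarrow> (complex ^ 'n) measure \<Rightarrow> (complex ^ 'n \<Rightarrow> complex) set" where
  "bspace \<Omega> \<sigma> = {f. holo_fun \<Omega> f \<and> f \<in> borel_measurable \<sigma> \<and> integrable \<sigma> (\<lambda>w. (cmod (f w))\<^sup>2)}"

text \<open>\<open>\<parallel>K_z\<parallel>\<close> and the normalized kernel \<open>k_z\<close>; \<open>K z\<close> is the function \<open>K_z\<close>.\<close>
definition knorm :: "'a measure \<Rightarrow> ('a \<Rightarrow> 'a \<Rightarrow> complex) \<Rightarrow> 'a \<Rightarrow> real" where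
  "knorm \<sigma> K z = l2norm \<sigma> (K z)"

definition nkern :: "'a measure \<Rightarrow> ('a \<Rightarrow> 'a \<Rightarrow> complex) \<Rightarrow> 'a \<Rightarrow> 'a \<Rightarrow> complex" where
  "nkern \<sigma> K z = (\<lambda>w. K z w / complex_of_real (knorm \<sigma> K z))"

definition lam :: "'a measure \<Rightarrow> ('a \<Rightarrow> 'a \<Rightarrow> complex) \<Rightarrow> 'a measure" where
  "lam \<sigma> K = density \<sigma> (\<lambda>z. ennreal ((knorm \<sigma> K z)\<^sup>2))"

text \<open>Bergman-type space (A.1)--(A.7), with Rudin--Forelli constant \<open>\<kappa>\<close>.
  \<open>\<phi> z\<close> is the automorphism \<open>\<phi>_z\<close>, \<open>d\<close> the metric on \<open>\<Omega>\<close>, \<open>\<sigma>\<close> the measure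
  (a finite Borel measure on \<open>\<complex>^n\<close> concentrated on \<open>\<Omega>\<close>), \<open>K\<close> the reproducing kernel.\<close>
definition bergman_type ::
  "(complex ^ 'n) set \<Rightarrow> (complex ^ 'n \<Rightarrow> complex ^ 'n \<Rightarrow> complex ^ 'n)
   \<Rightarrow> (complex ^ 'n \<Rightarrow> complex ^ 'n \<Rightarrow> real) \<Rightarrow> (complex ^ 'n) measure
   \<Rightarrow> (complex ^ 'n \<Rightarrow> complex ^ 'n \<Rightarrow> complex) \<Rightarrow> real \<Rightarrow> bool" where
  "bergman_type \<Omega> \<phi> d \<sigma> K \<kappa> \<longleftrightarrow>
     \<comment> \<open>domain containing 0\<close>
     open \<Omega> \<and> connected \<Omega> \<and> 0 \<in> \<Omega> \<and>
     \<comment> \<open>(A.1) involutive biholomorphic automorphisms\<close>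
     (\<forall>z\<in>\<Omega>. holo_map \<Omega> (\<phi> z) \<and> \<phi> z ` \<Omega> \<subseteq> \<Omega> \<and> (\<forall>u\<in>\<Omega>. \<phi> z (\<phi> z u) = u) \<and> \<phi> z 0 = z) \<and>
     \<comment> \<open>(A.2) metric\<close>
     Metric_space \<Omega> d \<and>
     (\<exists>C>0. \<forall>z\<in>\<Omega>. \<forall>u\<in>\<Omega>. \<forall>v\<in>\<Omega>.
        d (\<phi> z u) (\<phi> z v) \<le> C * d u v \<and> d u v \<le> C * d (\<phi> z u) (\<phi> z v)) \<and>
     separable_space (Metric_space.mtopology \<Omega> d) \<and>
     (\<forall>z\<in>\<Omega>. \<forall>r. compactin (Metric_space.mtopology \<Omega> d) (Metric_space.mcball \<Omega> d z r)) \<and>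
     \<comment> \<open>(A.3) finite Borel measure, reproducing kernel\<close>
     finite_measure \<sigma> \<and> sets \<sigma> = sets borel \<and> emeasure \<sigma> (UNIV - \<Omega>) = 0 \<and>
     (\<forall>z\<in>\<Omega>. K z \<in> bspace \<Omega> \<sigma>) \<and>
     (\<forall>f\<in>bspace \<Omega> \<sigma>. \<forall>z\<in>\<Omega>. f z = ip \<sigma> f (K z)) \<and>
     continuous_map (Metric_space.mtopology \<Omega> d) euclideanreal (knorm \<sigma> K) \<and>
     \<comment> \<open>(A.4) quasi-invariance and doubling of \<open>\<lambda>\<close>\<close>
     (\<exists>C::real>0. \<forall>z\<in>\<Omega>. \<forall>E\<in>sets borel. E \<subseteq> \<Omega> \<longrightarrow>
        emeasure (lam \<sigma> K) (\<phi> z ` E) \<le> ennreal C * emeasure (lam \<sigma> K) E \<and>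
        emeasure (lam \<sigma> K) E \<le> ennreal C * emeasure (lam \<sigma> K) (\<phi> z ` E)) \<and>
     (\<forall>z\<in>\<Omega>. \<forall>r>0. Metric_space.mball \<Omega> d z r \<in> sets \<sigma>) \<and>
     (\<exists>C::real. \<forall>z\<in>\<Omega>. \<forall>r>0.
        emeasure (lam \<sigma> K) (Metric_space.mball \<Omega> d z (2 * r))
          \<le> ennreal C * emeasure (lam \<sigma> K) (Metric_space.mball \<Omega> d z r)) \<and>
     \<comment> \<open>(A.5)\<close>
     (\<exists>C>0. \<forall>z\<in>\<Omega>. \<forall>w\<in>\<Omega>.
        cmod (ip \<sigma> (nkern \<sigma> K z) (nkern \<sigma> K w)) \<le> C / knorm \<sigma> K (\<phi> z w) \<and>
        1 / knorm \<sigma> K (\<phi> z w) \<le> C * cmod (ip \<sigma> (nkern \<sigma> K z) (nkern \<sigma> K w))) \<and>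
     \<comment> \<open>(A.6) Rudin--Forelli estimates\<close>
     0 \<le> \<kappa> \<and> \<kappa> < 2 \<and>
     (\<kappa> > 0 \<longrightarrow> (\<forall>r s. r > \<kappa> \<and> \<kappa> > s \<and> s > 0 \<longrightarrow>
        (\<exists>M::real. \<forall>z\<in>\<Omega>. (\<integral>\<^sup>+ w. ennreal (cmod (ip \<sigma> (K z) (K w)) powr ((r + s) / 2)
            / (knorm \<sigma> K z powr s * knorm \<sigma> K w powr r)) \<partial>lam \<sigma> K) \<le> ennreal M))) \<and>
     (\<kappa> = 0 \<longrightarrow> (\<forall>r>0.
        (\<exists>M::real. \<forall>z\<in>\<Omega>. (\<integral>\<^sup>+ w. ennreal (cmod (ip \<sigma> (K z) (K w)) powr ((r + r) / 2)
            / (knorm \<sigma> K z powr r * knorm \<sigma> K w powr r)) \<partial>lam \<sigma> K) \<le> ennreal M))) \<and>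
     \<comment> \<open>(A.7)\<close>
     (\<forall>M. \<exists>R. \<forall>z\<in>\<Omega>. d z 0 > R \<longrightarrow> knorm \<sigma> K z > M)"

definition Pop :: "'a measure \<Rightarrow> ('a \<Rightarrow> 'a \<Rightarrow> complex) \<Rightarrow> ('a \<Rightarrow> complex) \<Rightarrow> 'a \<Rightarrow> complex" where
  "Pop \<sigma> K f z = (LINT w|\<sigma>. ip \<sigma> (K w) (K z) * f w)"

definition wmeas :: "'a measure \<Rightarrow> ('a \<Rightarrow> 'a \<Rightarrow> complex) \<Rightarrow> real \<Rightarrow> 'a measure" where
  "wmeas \<sigma> K p = density (lam \<sigma> K) (\<lambda>w. ennreal (knorm \<sigma> K w powr (- p)))"

definition P_bounded_Lp :: "'a measure \<Rightarrow> ('a \<Rightarrow> 'a \<Rightarrow> complex) \<Rightarrow> 'a measure \<Rightarrow> real \<Rightarrow> bool" where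
  "P_bounded_Lp \<sigma> K \<mu> p \<longleftrightarrow> (\<exists>C::real. \<forall>f \<in> borel_measurable \<mu>.
      (\<integral>\<^sup>+ z. ennreal (cmod (Pop \<sigma> K f z) powr p) \<partial>\<mu>)
        \<le> ennreal C * (\<integral>\<^sup>+ w. ennreal (cmod (f w) powr p) \<partial>\<mu>))"

definition P_bounded_wsup :: "'a set \<Rightarrow> 'a measure \<Rightarrow> ('a \<Rightarrow> 'a \<Rightarrow> complex) \<Rightarrow> bool" where
  "P_bounded_wsup \<Omega> \<sigma> K \<longleftrightarrow> (\<exists>C::real. \<forall>f \<in> borel_measurable \<sigma>.
      (SUP w\<in>\<Omega>. ennreal (cmod (Pop \<sigma> K f w) / knorm \<sigma> K w))
        \<le> ennreal C * (SUP w\<in>\<Omega>. ennreal (cmod (f w) / knorm \<sigma> K w)))"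

end

theory Submission
  imports Defs
begin

text \<open>
  The projection \<open>P\<close> is dominated by the positive operator with kernel \<open>|\<langle>K_z, K_w\<rangle>| = |K_z(w)|\<close>,
  so it suffices to verify Schur's test. The Rudin--Forelli estimate with exponents \<open>(2 - s, s)\<close>
  says exactly that \<open>h(w) = \<parallel>K_w\<parallel>^s\<close> is a Schur test function:
  \<open>\<integral> |K_z(w)| h(w) d\<sigma>(w) \<le> C h(z)\<close>. For \<open>\<kappa> = 0\<close> take \<open>s = 1\<close>; as the kernel is symmetric,
  this single estimate gives both Schur conditions for the measure \<open>\<parallel>K_w\<parallel>^{-p} d\<lambda> = \<parallel>K_w\<parallel>^{2-p} d\<sigma>\<close>,
  and for \<open>p = \<infinity>\<close> the first of them suffices. For \<open>\<kappa> > 0\<close> choose \<open>s\<close> so small that \<open>s\<close> and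
  \<open>s(p - 1)\<close> are both admissible; they give the two Schur conditions for \<open>d\<sigma>\<close>. Schur's test
  itself follows from a weighted Hoelder inequality, obtained by integrating Young's inequality
  and optimising the scaling.
\<close>

section \<open>Weighted Hoelder inequality and Schur's test\<close>

lemma Young_inequality_scaled:
  fixes p c v g :: real
  assumes p: "p > 1" and c: "c > 0" and v: "v > 0" and g: "g \<ge> 0"
  shows "g \<le> (p - 1) / p * c * v + 1 / p * c powr (1 - p) * v powr (1 - p) * g powr p"
proof (cases "g = 0")
  case True
  then show ?thesis using p c v by simp
next
  case False
  define a where "a = c * v"
  define b where "b = c powr (1 - p) * v powr (1 - p) * g powr p"
  have "a powr ((p - 1) / p) * b powr (1 / p) = g"
    using p c v g False
    by (simp add: a_def b_def powr_mult powr_powr powr_add[symmetric] field_simps)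
  moreover have "a powr ((p - 1) / p) * b powr (1 / p) \<le> (p - 1) / p * a + 1 / p * b"
    using p c v g False by (intro Youngs_inequality_0) (auto simp: a_def b_def field_simps)
  ultimately show ?thesis by (simp add: a_def b_def mult.assoc)
qed

lemma powr_le_of_Young_bounds:
  fixes p A b y :: real
  assumes p: "p > 1" and A: "A > 0" and b: "b \<ge> 0" and y: "y \<ge> 0"
    and bound: "\<And>c. c > 0 \<Longrightarrow> y \<le> (p - 1) / p * c * A + 1 / p * c powr (1 - p) * b"
  shows "y powr p \<le> A powr (p - 1) * b"
proof (cases "b = 0")
  case True
  have "y \<le> 0"
  proof (rule field_le_epsilon)
    fix e :: real assume "e > 0"
    then have "y \<le> (p - 1) / p * (e * p / ((p - 1) * A)) * A"
      using bound[of "e * p / ((p - 1) * A)"] True p A by simp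
    also have "\<dots> = e" using p A by (simp add: field_simps)
    finally show "y \<le> 0 + e" by simp
  qed
  then show ?thesis using y True by simp
next
  case False
  define c where "c = (b / A) powr (1 / p)"
  have "(p - 1) / p * c * A + 1 / p * c powr (1 - p) * b = A powr ((p - 1) / p) * b powr (1 / p)"
    using p A b False
    by (simp add: c_def powr_divide powr_powr powr_add[symmetric] powr_diff field_simps)
  then have "y \<le> A powr ((p - 1) / p) * b powr (1 / p)"
    using bound[of c] A b False by (simp add: c_def)
  then have "y powr p \<le> (A powr ((p - 1) / p) * b powr (1 / p)) powr p"
    using y p by (intro powr_mono2) auto
  also have "\<dots> = A powr (p - 1) * b"
    using A b p by (simp add: powr_mult powr_powr)
  finally show ?thesis .
qed

lemma nn_integral_Young:
  fixes M :: "'a measure" and t v g :: "'a \<Rightarrow> real" and p c :: real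
  assumes p: "p > 1" and c: "c > 0"
    and [measurable]: "t \<in> borel_measurable M" "v \<in> borel_measurable M" "g \<in> borel_measurable M"
    and t: "\<And>w. t w \<ge> 0" and v: "\<And>w. v w > 0" and g: "\<And>w. g w \<ge> 0"
  shows "(\<integral>\<^sup>+ w. ennreal (t w * g w) \<partial>M)
    \<le> ennreal ((p - 1) / p * c) * (\<integral>\<^sup>+ w. ennreal (t w * v w) \<partial>M)
      + ennreal (1 / p * c powr (1 - p)) * (\<integral>\<^sup>+ w. ennreal (t w * v w powr (1 - p) * g w powr p) \<partial>M)"
proof -
  define \<alpha> where "\<alpha> = (p - 1) / p * c"
  define \<beta> where "\<beta> = 1 / p * c powr (1 - p)"
  have \<alpha>\<beta>: "\<alpha> \<ge> 0" "\<beta> \<ge> 0" using p c by (auto simp: \<alpha>_def \<beta>_def)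
  have "(\<integral>\<^sup>+ w. ennreal (t w * g w) \<partial>M) \<le> (\<integral>\<^sup>+ w. ennreal \<alpha> * ennreal (t w * v w)
      + ennreal \<beta> * ennreal (t w * v w powr (1 - p) * g w powr p) \<partial>M)"
  proof (rule nn_integral_mono)
    fix w
    have nn: "0 \<le> t w * v w" "0 \<le> t w * v w powr (1 - p) * g w powr p"
      using t[of w] v[of w] by simp_all
    have "t w * g w \<le> t w * (\<alpha> * v w + \<beta> * (v w powr (1 - p) * g w powr p))"
      using Young_inequality_scaled[OF p c v g, of w] t[of w]
      by (intro mult_left_mono) (auto simp: \<alpha>_def \<beta>_def mult.assoc)
    then have "t w * g w \<le> \<alpha> * (t w * v w) + \<beta> * (t w * v w powr (1 - p) * g w powr p)"
      by (simp add: algebra_simps)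
    then show "ennreal (t w * g w) \<le> ennreal \<alpha> * ennreal (t w * v w)
        + ennreal \<beta> * ennreal (t w * v w powr (1 - p) * g w powr p)"
      unfolding ennreal_mult[OF \<alpha>\<beta>(1) nn(1), symmetric] ennreal_mult[OF \<alpha>\<beta>(2) nn(2), symmetric]
        ennreal_plus[OF mult_nonneg_nonneg[OF \<alpha>\<beta>(1) nn(1)] mult_nonneg_nonneg[OF \<alpha>\<beta>(2) nn(2)], symmetric]
      by (rule ennreal_leI)
  qed
  also have "\<dots> = ennreal \<alpha> * (\<integral>\<^sup>+ w. ennreal (t w * v w) \<partial>M)
      + ennreal \<beta> * (\<integral>\<^sup>+ w. ennreal (t w * v w powr (1 - p) * g w powr p) \<partial>M)"
    by (simp add: nn_integral_add nn_integral_cmult)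
  finally show ?thesis unfolding \<alpha>_def \<beta>_def .
qed

lemma nn_integral_Holder_weighted:
  fixes M :: "'a measure" and t v g :: "'a \<Rightarrow> real" and p A y :: real
  assumes p: "p \<ge> 1" and A: "A > 0"
    and meas [measurable]: "t \<in> borel_measurable M" "v \<in> borel_measurable M" "g \<in> borel_measurable M"
    and t: "\<And>w. t w \<ge> 0" and v: "\<And>w. v w > 0" and g: "\<And>w. g w \<ge> 0"
    and tv: "(\<integral>\<^sup>+ w. ennreal (t w * v w) \<partial>M) \<le> ennreal A"
    and y: "0 \<le> y" "ennreal y \<le> (\<integral>\<^sup>+ w. ennreal (t w * g w) \<partial>M)"
  shows "ennreal (y powr p)
    \<le> ennreal (A powr (p - 1)) * (\<integral>\<^sup>+ w. ennreal (t w * v w powr (1 - p) * g w powr p) \<partial>M)"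
proof (cases "p = 1")
  case True
  have "(\<integral>\<^sup>+ w. ennreal (t w * v w powr (1 - p) * g w powr p) \<partial>M) = (\<integral>\<^sup>+ w. ennreal (t w * g w) \<partial>M)"
    using True v g by (intro nn_integral_cong) (simp add: order.strict_implies_not_eq[OF v, symmetric])
  moreover have "y powr p = y" "A powr (p - 1) = 1" using True y(1) A by simp_all
  ultimately show ?thesis using y(2) by simp
next
  case False
  then have p: "p > 1" using p by simp
  define B where "B = (\<integral>\<^sup>+ w. ennreal (t w * v w powr (1 - p) * g w powr p) \<partial>M)"
  show ?thesis
  proof (cases "B = \<infinity>")
    case True
    then show ?thesis using A by (simp add: B_def[symmetric] ennreal_mult_top)
  next
    case False
    then obtain b where b: "b \<ge> 0" "B = ennreal b" by (cases B) auto
    have "y \<le> (p - 1) / p * c * A + 1 / p * c powr (1 - p) * b" if c: "c > 0" for c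
    proof -
      have "ennreal y \<le> ennreal ((p - 1) / p * c) * (\<integral>\<^sup>+ w. ennreal (t w * v w) \<partial>M)
          + ennreal (1 / p * c powr (1 - p)) * B"
        using y(2) nn_integral_Young[OF p c meas t v g] unfolding B_def by (rule order.trans)
      also have "\<dots> \<le> ennreal ((p - 1) / p * c) * ennreal A + ennreal (1 / p * c powr (1 - p)) * ennreal b"
        unfolding b(2) by (intro add_mono mult_left_mono tv) simp_all
      also have "\<dots> = ennreal ((p - 1) / p * c * A + 1 / p * c powr (1 - p) * b)"
        using p c A b(1) by (simp add: ennreal_mult[symmetric] mult_ac)
      finally show ?thesis
        using p c A b(1) by (subst (asm) ennreal_le_iff) auto
    qed
    then have "y powr p \<le> A powr (p - 1) * b"
      by (rule powr_le_of_Young_bounds[OF p A b(1) y(1)])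
    then have "ennreal (y powr p) \<le> ennreal (A powr (p - 1)) * ennreal b"
      unfolding ennreal_mult[OF powr_ge_zero b(1), symmetric] by (rule ennreal_leI)
    then show ?thesis unfolding B_def[symmetric] b(2) .
  qed
qed

lemma nn_integral_Schur_column:
  fixes M :: "'a measure" and t :: "'a \<Rightarrow> 'a \<Rightarrow> real" and u v g :: "'a \<Rightarrow> real"
    and p C :: real
  assumes "sigma_finite_measure M" and C: "C \<ge> 0"
    and [measurable]: "(\<lambda>(z, w). t z w) \<in> borel_measurable (M \<Otimes>\<^sub>M M)"
      "u \<in> borel_measurable M" "v \<in> borel_measurable M" "g \<in> borel_measurable M"
    and t: "\<And>z w. t z w \<ge> 0" and u: "\<And>z. u z \<ge> 0" and v: "\<And>z. v z > 0"
    and column: "AE w in M. (\<integral>\<^sup>+ z. ennreal (t z w * v z powr (p - 1) * u z) \<partial>M)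
                    \<le> ennreal (C * v w powr (p - 1) * u w)"
  shows "(\<integral>\<^sup>+ z. ennreal (u z * v z powr (p - 1))
            * (\<integral>\<^sup>+ w. ennreal (t z w * v w powr (1 - p) * g w powr p) \<partial>M) \<partial>M)
    \<le> ennreal C * (\<integral>\<^sup>+ w. ennreal (u w * g w powr p) \<partial>M)"
proof -
  interpret pair_sigma_finite M M
    using assms(1) by (simp add: pair_sigma_finite.intro)
  define F where "F z w = u z * v z powr (p - 1) * t z w * v w powr (1 - p) * g w powr p" for z w
  have [measurable]: "(\<lambda>(z, w). F z w) \<in> borel_measurable (M \<Otimes>\<^sub>M M)"
    unfolding F_def by measurable
  have "(\<integral>\<^sup>+ z. ennreal (u z * v z powr (p - 1))
          * (\<integral>\<^sup>+ w. ennreal (t z w * v w powr (1 - p) * g w powr p) \<partial>M) \<partial>M)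
      = (\<integral>\<^sup>+ z. \<integral>\<^sup>+ w. ennreal (F z w) \<partial>M \<partial>M)"
  proof (rule nn_integral_cong)
    fix z assume "z \<in> space M"
    then have [measurable]: "(\<lambda>w. t z w) \<in> borel_measurable M"
      using measurable_Pair2[of "\<lambda>(z, w). t z w"] by simp
    show "ennreal (u z * v z powr (p - 1)) * (\<integral>\<^sup>+ w. ennreal (t z w * v w powr (1 - p) * g w powr p) \<partial>M)
        = (\<integral>\<^sup>+ w. ennreal (F z w) \<partial>M)"
      unfolding F_def using u[of z] t[of z]
      by (subst nn_integral_cmult[symmetric]) (auto intro!: nn_integral_cong simp: ennreal_mult[symmetric] mult_ac)
  qed
  also have "\<dots> = (\<integral>\<^sup>+ w. \<integral>\<^sup>+ z. ennreal (F z w) \<partial>M \<partial>M)"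
    by (rule Fubini') measurable
  also have "\<dots> \<le> (\<integral>\<^sup>+ w. ennreal C * ennreal (u w * g w powr p) \<partial>M)"
  proof (rule nn_integral_mono_AE)
    show "AE w in M. (\<integral>\<^sup>+ z. ennreal (F z w) \<partial>M) \<le> ennreal C * ennreal (u w * g w powr p)"
      using column AE_space
    proof eventually_elim
      case (elim w)
      then have [measurable]: "(\<lambda>z. t z w) \<in> borel_measurable M"
        using measurable_Pair1[of "\<lambda>(z, w). t z w"] by simp
      have vw: "v w powr (1 - p) * v w powr (p - 1) = 1"
        using v[of w] by (simp add: powr_add[symmetric])
      have "(\<integral>\<^sup>+ z. ennreal (F z w) \<partial>M)
          = ennreal (v w powr (1 - p) * g w powr p) * (\<integral>\<^sup>+ z. ennreal (t z w * v z powr (p - 1) * u z) \<partial>M)"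
        unfolding F_def using u t
        by (subst nn_integral_cmult[symmetric]) (auto intro!: nn_integral_cong simp: ennreal_mult[symmetric] mult_ac)
      also have "\<dots> \<le> ennreal (v w powr (1 - p) * g w powr p) * ennreal (C * v w powr (p - 1) * u w)"
        by (rule mult_left_mono[OF elim(1)]) simp
      also have "\<dots> = ennreal C * ennreal (u w * g w powr p)"
        using C u[of w] vw by (simp add: ennreal_mult[symmetric] mult_ac)
      finally show ?case .
    qed
  qed
  also have "\<dots> = ennreal C * (\<integral>\<^sup>+ w. ennreal (u w * g w powr p) \<partial>M)"
    by (rule nn_integral_cmult) measurable
  finally show ?thesis .
qed

lemma Schur_test_nn_integral:
  fixes M :: "'a measure" and t :: "'a \<Rightarrow> 'a \<Rightarrow> real" and u v g y :: "'a \<Rightarrow> real"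
    and p C1 C2 :: real
  assumes M: "sigma_finite_measure M" and p: "p \<ge> 1" and C: "C1 > 0" "C2 \<ge> 0"
    and meas [measurable]: "(\<lambda>(z, w). t z w) \<in> borel_measurable (M \<Otimes>\<^sub>M M)"
      "u \<in> borel_measurable M" "v \<in> borel_measurable M" "g \<in> borel_measurable M"
    and t: "\<And>z w. t z w \<ge> 0" and u: "\<And>z. u z \<ge> 0" and v: "\<And>z. v z > 0"
    and g: "\<And>z. g z \<ge> 0" and y: "\<And>z. y z \<ge> 0"
    and row: "AE z in M. (\<integral>\<^sup>+ w. ennreal (t z w * v w) \<partial>M) \<le> ennreal (C1 * v z)"
    and column: "AE w in M. (\<integral>\<^sup>+ z. ennreal (t z w * v z powr (p - 1) * u z) \<partial>M)
                    \<le> ennreal (C2 * v w powr (p - 1) * u w)"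
    and y_le: "AE z in M. ennreal (y z) \<le> (\<integral>\<^sup>+ w. ennreal (t z w * g w) \<partial>M)"
  shows "(\<integral>\<^sup>+ z. ennreal (y z powr p) \<partial>density M u)
    \<le> ennreal (C1 powr (p - 1) * C2) * (\<integral>\<^sup>+ w. ennreal (g w powr p) \<partial>density M u)"
proof -
  interpret sigma_finite_measure M
    by (rule M)
  define B where "B z = (\<integral>\<^sup>+ w. ennreal (t z w * v w powr (1 - p) * g w powr p) \<partial>M)" for z
  have [measurable]: "B \<in> borel_measurable M"
    unfolding B_def by measurable
  have "AE z in M. ennreal (y z powr p) \<le> ennreal ((C1 * v z) powr (p - 1)) * B z"
    using row y_le AE_space
  proof eventually_elim
    case (elim z)
    show ?case unfolding B_def
      by (rule nn_integral_Holder_weighted[OF p _ _ _ _ t v g elim(1) y elim(2)])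
        (use C v[of z] elim(3) in simp_all)
  qed
  then have "(\<integral>\<^sup>+ z. ennreal (y z powr p) \<partial>density M u)
      \<le> (\<integral>\<^sup>+ z. ennreal ((C1 * v z) powr (p - 1)) * B z \<partial>density M u)"
    by (intro nn_integral_mono_AE) (simp add: AE_density eventually_mono)
  also have "\<dots> = (\<integral>\<^sup>+ z. ennreal (u z) * (ennreal ((C1 * v z) powr (p - 1)) * B z) \<partial>M)"
    by (rule nn_integral_density) measurable
  also have "\<dots> = ennreal (C1 powr (p - 1)) * (\<integral>\<^sup>+ z. ennreal (u z * v z powr (p - 1)) * B z \<partial>M)"
    using C v u
    by (subst nn_integral_cmult[symmetric])
      (auto intro!: nn_integral_cong simp: powr_mult ennreal_mult[symmetric] mult_ac)
  also have "\<dots> \<le> ennreal (C1 powr (p - 1)) * (ennreal C2 * (\<integral>\<^sup>+ w. ennreal (u w * g w powr p) \<partial>M))"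
    unfolding B_def
    by (intro mult_left_mono nn_integral_Schur_column[OF M C(2) meas t u v column]) simp
  also have "(\<integral>\<^sup>+ w. ennreal (u w * g w powr p) \<partial>M) = (\<integral>\<^sup>+ w. ennreal (g w powr p) \<partial>density M u)"
    using u by (simp add: nn_integral_density ennreal_mult)
  finally show ?thesis
    using C by (simp add: ennreal_mult mult.assoc)
qed

lemma Schur_exponent_exists:
  fixes \<kappa> p :: real
  assumes \<kappa>: "0 < \<kappa>" "\<kappa> < 2" and p: "1 < p"
  obtains s where "0 < s" "s < \<kappa>" "\<kappa> < 2 - s" "0 < s * (p - 1)" "s * (p - 1) < \<kappa>" "\<kappa> < 2 - s * (p - 1)"
proof -
  define m where "m = min \<kappa> (2 - \<kappa>)"
  have m: "0 < m" "m \<le> \<kappa>" "m \<le> 2 - \<kappa>"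
    using \<kappa> by (auto simp: m_def)
  define a where "a = 1 / (2 * p)"
  define b where "b = (p - 1) / (2 * p)"
  have ab: "0 < a" "a < 1" "0 < b" "b < 1"
    using p by (simp_all add: a_def b_def field_simps)
  define s where "s = m * a"
  have sp: "s * (p - 1) = m * b"
    by (simp add: s_def a_def b_def)
  have "0 < s" "s < m"
    unfolding s_def using ab m(1) mult_strict_left_mono[OF ab(2) m(1)] by simp_all
  moreover have "0 < s * (p - 1)" "s * (p - 1) < m"
    unfolding sp using ab m(1) mult_strict_left_mono[OF ab(4) m(1)] by simp_all
  ultimately show thesis
    using m by (intro that[of s]) linarith+
qed

section \<open>Joint measurability of Caratheodory functions\<close>

lemma open_dense_sequence:
  fixes S :: "'a::{metric_space, second_countable_topology} set"
  assumes S: "open S" "S \<noteq> {}"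
  obtains e :: "nat \<Rightarrow> 'a" where "\<And>i. e i \<in> S" "\<And>y r. y \<in> S \<Longrightarrow> r > 0 \<Longrightarrow> \<exists>i. dist y (e i) < r"
proof -
  obtain D :: "'a set" where "countable D" and D: "\<And>U. open U \<Longrightarrow> U \<noteq> {} \<Longrightarrow> \<exists>d\<in>D. d \<in> U"
    using countable_dense_exists by blast
  have dense: "\<exists>d\<in>D \<inter> S. dist y d < r" if "y \<in> S" "r > 0" for y r
  proof -
    have "open (ball y r \<inter> S)" "y \<in> ball y r \<inter> S" using S that by auto
    then obtain d where "d \<in> D" "d \<in> ball y r \<inter> S" using D by blast
    then show ?thesis by auto
  qed
  define e where "e = from_nat_into (D \<inter> S)"
  obtain y0 where "y0 \<in> S" using S by blast
  then have "D \<inter> S \<noteq> {}" using dense[of y0 1] by auto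
  show thesis
  proof (rule that)
    show "e i \<in> S" for i
      unfolding e_def by (rule from_nat_into[THEN IntD2]) fact
    show "\<exists>i. dist y (e i) < r" if yr: "y \<in> S" "r > 0" for y r
    proof -
      obtain d where d: "d \<in> D \<inter> S" "dist y d < r" using dense[OF yr] by blast
      moreover obtain i where "e i = d"
        using from_nat_into_surj[OF countable_Int1[OF \<open>countable D\<close>] d(1)] unfolding e_def ..
      ultimately show ?thesis by blast
    qed
  qed
qed

lemma borel_measurable_Caratheodory:
  fixes g :: "'a \<Rightarrow> 'b::{metric_space, second_countable_topology} \<Rightarrow> 'c::metric_space"
  assumes S: "open S"
    and cont: "\<And>x. x \<in> space M \<Longrightarrow> continuous_on S (g x)"
    and meas: "\<And>y. y \<in> S \<Longrightarrow> (\<lambda>x. g x y) \<in> borel_measurable M"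
  shows "(\<lambda>(x, y). if y \<in> S then g x y else c) \<in> borel_measurable (M \<Otimes>\<^sub>M borel)"
proof (cases "S = {}")
  case True
  then show ?thesis by simp
next
  case False
  obtain e :: "nat \<Rightarrow> 'b" where e: "\<And>i. e i \<in> S" and approx: "\<And>y r. y \<in> S \<Longrightarrow> r > 0 \<Longrightarrow> \<exists>i. dist y (e i) < r"
    using open_dense_sequence[OF S False] by blast
  define k where "k n y = (LEAST i. dist y (e i) < 1 / Suc n)" for n y
  define f where "f n = (\<lambda>(x, y). if y \<in> S then g x (e (k n y)) else c)" for n
  have [measurable]: "S \<in> sets borel" "\<And>i. (\<lambda>x. g x (e i)) \<in> borel_measurable M"
    using borel_open[OF S] meas[OF e] by blast+
  have "(\<lambda>(x, y). if y \<in> S then g x (e i) else c) \<in> borel_measurable (M \<Otimes>\<^sub>M borel)" for i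
    by measurable
  moreover have "(\<lambda>(x, y). k n y) \<in> measurable (M \<Otimes>\<^sub>M borel) (count_space UNIV)" for n
  proof -
    have "k n \<in> measurable borel (count_space UNIV)"
      unfolding k_def by measurable
    then show ?thesis
      by (simp add: split_beta' measurable_compose[OF measurable_snd])
  qed
  ultimately have f_meas: "f n \<in> borel_measurable (M \<Otimes>\<^sub>M borel)" for n
    using measurable_compose_countable[of "\<lambda>i (x, y). if y \<in> S then g x (e i) else c" _ _
        "\<lambda>(x, y). k n y"]
    unfolding f_def by (simp add: split_beta')
  have lim: "(\<lambda>n. f n (x, y)) \<longlonglongrightarrow> (if y \<in> S then g x y else c)"
    if "x \<in> space M" for x y
  proof (cases "y \<in> S")
    case True
    have "\<exists>i. dist y (e i) < 1 / Suc n" for n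
      using approx[OF True] by simp
    then have "dist y (e (k n y)) < 1 / Suc n" for n
      unfolding k_def by (rule LeastI_ex[of "\<lambda>i. dist y (e i) < 1 / Suc n"])
    then have "(\<lambda>n. dist (e (k n y)) y) \<longlonglongrightarrow> 0"
      by (intro LIMSEQ_norm_0) (simp add: dist_commute)
    then have "(\<lambda>n. e (k n y)) \<longlonglongrightarrow> y"
      by (rule tendsto_dist_iff[THEN iffD2])
    moreover have "isCont (g x) y"
      using continuous_on_interior[OF cont[OF that]] S True by (simp add: interior_open)
    ultimately have "(\<lambda>n. g x (e (k n y))) \<longlonglongrightarrow> g x y"
      by (rule isCont_tendsto_compose[rotated])
    then show ?thesis using True by (simp add: f_def)
  qed (simp add: f_def)
  show ?thesis
  proof (rule borel_measurable_LIMSEQ_metric[OF f_meas])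
    fix p :: "'a \<times> 'b" assume p: "p \<in> space (M \<Otimes>\<^sub>M borel)"
    obtain x y where xy: "p = (x, y)" by (cases p)
    have "x \<in> space M" using p unfolding xy space_pair_measure by blast
    then show "(\<lambda>n. f n p) \<longlonglongrightarrow> (case p of (x, y) \<Rightarrow> if y \<in> S then g x y else c)"
      unfolding xy prod.case by (rule lim)
  qed
qed

section \<open>Bergman-type spaces\<close>

lemma density_cong_AE:
  "AE x in M. f x = g x \<Longrightarrow> density M f = density M g"
  unfolding density_def by (auto intro!: measure_of_eq nn_integral_cong_AE sets.space_closed)

lemma borel_measurable_cnj [measurable (raw)]:
  "f \<in> borel_measurable M \<Longrightarrow> (\<lambda>x. cnj (f x)) \<in> borel_measurable M"
  by (rule measurable_compose[of f _ borel cnj])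
    (auto intro: borel_measurable_continuous_onI continuous_on_cnj continuous_on_id)

lemma ip_cnj: "ip \<sigma> f g = cnj (ip \<sigma> g f)"
proof -
  have "cnj (ip \<sigma> g f) = (LINT w|\<sigma>. cnj (g w * cnj (f w)))"
    unfolding ip_def by (rule Bochner_Integration.integral_cnj[symmetric])
  also have "\<dots> = ip \<sigma> f g"
    unfolding ip_def by (simp add: mult.commute)
  finally show ?thesis ..
qed

locale bergman_type_space =
  fixes \<Omega> :: "(complex ^ 'n) set"
    and \<phi> :: "complex ^ 'n \<Rightarrow> complex ^ 'n \<Rightarrow> complex ^ 'n"
    and d :: "complex ^ 'n \<Rightarrow> complex ^ 'n \<Rightarrow> real"
    and \<sigma> :: "(complex ^ 'n) measure"
    and K :: "complex ^ 'n \<Rightarrow> complex ^ 'n \<Rightarrow> complex"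
    and \<kappa> :: real
  assumes bergman_type: "bergman_type \<Omega> \<phi> d \<sigma> K \<kappa>"
begin

lemma open_domain: "open \<Omega>"
  using bergman_type unfolding bergman_type_def by (elim conjE)

lemma finite_measure_sigma: "finite_measure \<sigma>"
  using bergman_type unfolding bergman_type_def by (elim conjE)

lemma sets_sigma: "sets \<sigma> = sets borel"
  using bergman_type unfolding bergman_type_def by (elim conjE)

lemma null_complement: "emeasure \<sigma> (UNIV - \<Omega>) = 0"
  using bergman_type unfolding bergman_type_def by (elim conjE)

lemma kernel_in_bspace [rule_format]: "\<forall>z\<in>\<Omega>. K z \<in> bspace \<Omega> \<sigma>"
  using bergman_type unfolding bergman_type_def by (elim conjE)

lemma reproducing [rule_format]: "\<forall>f\<in>bspace \<Omega> \<sigma>. \<forall>z\<in>\<Omega>. f z = ip \<sigma> f (K z)"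
  using bergman_type unfolding bergman_type_def by (elim conjE)

lemma kappa_less_2: "\<kappa> < 2"
  using bergman_type unfolding bergman_type_def by (elim conjE)

lemma Rudin_Forelli_pos [rule_format]: "\<kappa> > 0 \<longrightarrow> (\<forall>r s. r > \<kappa> \<and> \<kappa> > s \<and> s > 0 \<longrightarrow>
        (\<exists>M::real. \<forall>z\<in>\<Omega>. (\<integral>\<^sup>+ w. ennreal (cmod (ip \<sigma> (K z) (K w)) powr ((r + s) / 2)
            / (knorm \<sigma> K z powr s * knorm \<sigma> K w powr r)) \<partial>lam \<sigma> K) \<le> ennreal M))"
  using bergman_type unfolding bergman_type_def by (elim conjE)

lemma Rudin_Forelli_zero [rule_format]: "\<kappa> = 0 \<longrightarrow> (\<forall>r>0.
        (\<exists>M::real. \<forall>z\<in>\<Omega>. (\<integral>\<^sup>+ w. ennreal (cmod (ip \<sigma> (K z) (K w)) powr ((r + r) / 2)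
            / (knorm \<sigma> K z powr r * knorm \<sigma> K w powr r)) \<partial>lam \<sigma> K) \<le> ennreal M))"
  using bergman_type unfolding bergman_type_def by (elim conjE)

sublocale finite_measure \<sigma>
  by (rule finite_measure_sigma)

lemma space_sigma [simp]: "space \<sigma> = UNIV"
  using sets_eq_imp_space_eq[OF sets_sigma] by simp

lemma measurable_sigma [simp]: "measurable \<sigma> N = measurable borel N"
  by (rule measurable_cong_sets[OF sets_sigma refl])

lemma domain_borel [measurable]: "\<Omega> \<in> sets borel"
  using open_domain by simp

lemma AE_domain: "AE z in \<sigma>. z \<in> \<Omega>"
  using null_complement open_domain sets_sigma by (intro AE_I'[of "UNIV - \<Omega>"]) (auto simp: null_sets_def)

lemma kernel_eq_ip: "z \<in> \<Omega> \<Longrightarrow> w \<in> \<Omega> \<Longrightarrow> ip \<sigma> (K z) (K w) = K z w"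
  using reproducing[OF kernel_in_bspace] by simp

lemma kernel_cnj: "z \<in> \<Omega> \<Longrightarrow> w \<in> \<Omega> \<Longrightarrow> K z w = cnj (K w z)"
  using kernel_eq_ip ip_cnj by metis

lemma kernel_measurable [measurable]: "z \<in> \<Omega> \<Longrightarrow> K z \<in> borel_measurable borel"
  using kernel_in_bspace[of z] by (simp add: bspace_def)

lemma kernel_continuous_on: "z \<in> \<Omega> \<Longrightarrow> continuous_on \<Omega> (K z)"
  using kernel_in_bspace[of z]
  by (auto simp: bspace_def holo_fun_def intro!: continuous_at_imp_continuous_on
      dest!: has_derivative_continuous)

text \<open>
  \<open>Kabs z w = |K_z(w)|\<close> and \<open>Knorm z = \<parallel>K_z\<parallel>\<close> on \<open>\<Omega>\<close>; outside \<open>\<Omega>\<close>, where \<open>K\<close> is arbitrary, they are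
  set to \<open>0\<close> and \<open>1\<close>. This makes them measurable and \<open>Knorm\<close> positive, and since \<open>\<sigma>\<close> is
  concentrated on \<open>\<Omega>\<close> it changes no integral.
\<close>

definition Kabs :: "complex ^ 'n \<Rightarrow> complex ^ 'n \<Rightarrow> real" where
  "Kabs z w = (if z \<in> \<Omega> \<and> w \<in> \<Omega> then cmod (K z w) else 0)"

definition Knorm :: "complex ^ 'n \<Rightarrow> real" where
  "Knorm z = (if z \<in> \<Omega> then knorm \<sigma> K z else 1)"

lemma Kabs_commute: "Kabs z w = Kabs w z"
  by (cases "z \<in> \<Omega> \<and> w \<in> \<Omega>") (auto simp: Kabs_def dest: kernel_cnj)

lemma Kabs_measurable [measurable]: "(\<lambda>(z, w). Kabs z w) \<in> borel_measurable (\<sigma> \<Otimes>\<^sub>M \<sigma>)"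
proof -
  \<comment> \<open>\<open>K z w\<close> is continuous in \<open>w\<close> and, by conjugate symmetry, measurable in \<open>z\<close>.\<close>
  define g where "g z w = (if z \<in> \<Omega> then K z w else 0)" for z w
  have "(\<lambda>(z, w). if w \<in> \<Omega> then g z w else 0) \<in> borel_measurable (\<sigma> \<Otimes>\<^sub>M borel)"
  proof (rule borel_measurable_Caratheodory[OF open_domain])
    show "continuous_on \<Omega> (g z)" for z
      by (cases "z \<in> \<Omega>") (simp_all add: g_def kernel_continuous_on)
    show "(\<lambda>z. g z w) \<in> borel_measurable \<sigma>" if w: "w \<in> \<Omega>" for w
    proof -
      have "g z w = (if z \<in> \<Omega> then cnj (K w z) else 0)" for z
        using kernel_cnj[OF _ w] by (simp add: g_def)
      then show ?thesis using w by simp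
    qed
  qed
  moreover have "sets (\<sigma> \<Otimes>\<^sub>M borel) = sets (\<sigma> \<Otimes>\<^sub>M \<sigma>)"
    by (rule sets_pair_measure_cong) (simp_all add: sets_sigma)
  ultimately have "(\<lambda>p. cmod ((\<lambda>(z, w). if w \<in> \<Omega> then g z w else 0) p)) \<in> borel_measurable (\<sigma> \<Otimes>\<^sub>M \<sigma>)"
    using measurable_cong_sets by (blast intro: borel_measurable_norm measurable_compose)
  moreover have "(\<lambda>p. cmod ((\<lambda>(z, w). if w \<in> \<Omega> then g z w else 0) p)) = (\<lambda>(z, w). Kabs z w)"
    by (auto simp: Kabs_def g_def)
  ultimately show ?thesis by simp
qed

lemma kernel_diag: "z \<in> \<Omega> \<Longrightarrow> K z z = of_real (LINT w|\<sigma>. (cmod (K z w))\<^sup>2)"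
proof -
  assume z: "z \<in> \<Omega>"
  have "ip \<sigma> (K z) (K z) = (LINT w|\<sigma>. complex_of_real ((cmod (K z w))\<^sup>2))"
    unfolding ip_def by (simp only: complex_norm_square)
  then show ?thesis
    unfolding kernel_eq_ip[OF z z] by (simp only: integral_complex_of_real)
qed

lemma knorm_eq_sqrt_diag: "z \<in> \<Omega> \<Longrightarrow> knorm \<sigma> K z = sqrt (Kabs z z)"
proof -
  assume z: "z \<in> \<Omega>"
  have "0 \<le> (LINT w|\<sigma>. (cmod (K z w))\<^sup>2)" by (rule integral_nonneg_AE) simp
  then show ?thesis
    using kernel_diag[OF z] z by (simp add: knorm_def l2norm_def Kabs_def)
qed

lemma Knorm_measurable [measurable]: "Knorm \<in> borel_measurable \<sigma>"
proof -
  have "(\<lambda>z. (z, z)) \<in> measurable \<sigma> (\<sigma> \<Otimes>\<^sub>M \<sigma>)"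
    by (intro measurable_Pair measurable_ident_sets refl)
  from measurable_compose[OF this Kabs_measurable]
  have [measurable]: "(\<lambda>z. Kabs z z) \<in> borel_measurable borel" by simp
  have "Knorm = (\<lambda>z. if z \<in> \<Omega> then sqrt (Kabs z z) else 1)"
    by (auto simp: Knorm_def knorm_eq_sqrt_diag)
  then show ?thesis by simp
qed

lemma const_in_bspace: "(\<lambda>_. c) \<in> bspace \<Omega> \<sigma>"
proof -
  have "((\<lambda>_. c) has_derivative (\<lambda>_. 0)) (at z)" for z :: "complex ^ 'n"
    by (rule has_derivative_const)
  then have "holo_fun \<Omega> (\<lambda>_. c)"
    using open_domain unfolding holo_fun_def by fastforce
  then show ?thesis unfolding bspace_def by simp
qed

lemma knorm_pos: "z \<in> \<Omega> \<Longrightarrow> knorm \<sigma> K z > 0"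
proof -
  assume z: "z \<in> \<Omega>"
  have int: "integrable \<sigma> (\<lambda>w. (cmod (K z w))\<^sup>2)"
    using kernel_in_bspace[OF z] by (simp add: bspace_def)
  have "(LINT w|\<sigma>. (cmod (K z w))\<^sup>2) \<noteq> 0"
  proof
    assume "(LINT w|\<sigma>. (cmod (K z w))\<^sup>2) = 0"
    then have "AE w in \<sigma>. K z w = 0"
      using integral_nonneg_eq_0_iff_AE[OF int] by simp
    then have "ip \<sigma> (\<lambda>_. 1) (K z) = 0"
      unfolding ip_def by (subst integral_cong_AE[where g = "\<lambda>_. 0"]) (use z in \<open>auto elim: eventually_mono\<close>)
    moreover have "ip \<sigma> (\<lambda>_. 1) (K z) = 1"
      using reproducing[OF const_in_bspace z] by simp
    ultimately show False by simp
  qed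
  moreover have "0 \<le> (LINT w|\<sigma>. (cmod (K z w))\<^sup>2)" by (rule integral_nonneg_AE) simp
  ultimately have "0 < (LINT w|\<sigma>. (cmod (K z w))\<^sup>2)" by linarith
  then show ?thesis by (simp add: knorm_def l2norm_def)
qed

lemma Knorm_pos: "Knorm z > 0"
  using knorm_pos by (simp add: Knorm_def)

lemma lam_eq_density: "lam \<sigma> K = density \<sigma> (\<lambda>z. ennreal ((Knorm z)\<^sup>2))"
proof -
  have "AE z in \<sigma>. ennreal ((knorm \<sigma> K z)\<^sup>2) = ennreal ((Knorm z)\<^sup>2)"
    using AE_domain by eventually_elim (simp add: Knorm_def)
  then show ?thesis
    unfolding lam_def by (rule density_cong_AE)
qed

lemma AE_lam_domain: "AE z in lam \<sigma> K. z \<in> \<Omega>"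
proof -
  have "(\<lambda>z. ennreal ((Knorm z)\<^sup>2)) \<in> borel_measurable \<sigma>" by measurable
  then show ?thesis
    using AE_domain unfolding lam_eq_density by (simp add: AE_density eventually_mono)
qed

lemma wmeas_eq_density: "wmeas \<sigma> K p = density \<sigma> (\<lambda>z. ennreal (Knorm z powr (2 - p)))"
proof -
  have "AE z in lam \<sigma> K. ennreal (knorm \<sigma> K z powr (- p)) = ennreal (Knorm z powr (- p))"
    using AE_lam_domain by eventually_elim (simp add: Knorm_def)
  then have "wmeas \<sigma> K p = density (lam \<sigma> K) (\<lambda>z. ennreal (Knorm z powr (- p)))"
    unfolding wmeas_def by (rule density_cong_AE)
  also have "\<dots> = density \<sigma> (\<lambda>z. ennreal ((Knorm z)\<^sup>2) * ennreal (Knorm z powr (- p)))"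
    unfolding lam_eq_density by (rule density_density_eq) measurable
  also have "(\<lambda>z. ennreal ((Knorm z)\<^sup>2) * ennreal (Knorm z powr (- p))) = (\<lambda>z. ennreal (Knorm z powr (2 - p)))"
  proof
    fix z
    have "(Knorm z)\<^sup>2 * Knorm z powr (- p) = Knorm z powr (2 - p)"
      using Knorm_pos[of z] by (simp add: powr_diff powr_minus field_simps)
    then show "ennreal ((Knorm z)\<^sup>2) * ennreal (Knorm z powr (- p)) = ennreal (Knorm z powr (2 - p))"
      by (simp add: ennreal_mult[symmetric])
  qed
  finally show ?thesis .
qed

text \<open>With \<open>r = 2 - s\<close> the kernel enters the Rudin--Forelli integral to the power \<open>(r + s)/2 = 1\<close>.\<close>

lemma Rudin_Forelli_complementary:
  assumes s: "0 < s" and admissible: "\<kappa> = 0 \<and> s = 1 \<or> 0 < \<kappa> \<and> s < \<kappa> \<and> \<kappa> < 2 - s"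
  obtains M where "\<And>z. z \<in> \<Omega> \<Longrightarrow> (\<integral>\<^sup>+ w. ennreal (cmod (ip \<sigma> (K z) (K w)) powr ((2 - s + s) / 2)
      / (knorm \<sigma> K z powr s * knorm \<sigma> K w powr (2 - s))) \<partial>lam \<sigma> K) \<le> ennreal M"
  using admissible
proof
  assume "\<kappa> = 0 \<and> s = 1"
  then show thesis using that Rudin_Forelli_zero[of 1] by auto
next
  assume "0 < \<kappa> \<and> s < \<kappa> \<and> \<kappa> < 2 - s"
  then show thesis using that Rudin_Forelli_pos[of "2 - s" s] s by auto
qed

lemma Rudin_Forelli_integral_eq:
  assumes z: "z \<in> \<Omega>"
  shows "(\<integral>\<^sup>+ w. ennreal (cmod (ip \<sigma> (K z) (K w)) powr ((2 - s + s) / 2)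
      / (knorm \<sigma> K z powr s * knorm \<sigma> K w powr (2 - s))) \<partial>lam \<sigma> K)
    = ennreal (1 / Knorm z powr s) * (\<integral>\<^sup>+ w. ennreal (Kabs z w * Knorm w powr s) \<partial>\<sigma>)"
proof -
  define c where "c = Knorm z powr s"
  have c: "c > 0" using Knorm_pos[of z] by (simp add: c_def)
  have "AE w in lam \<sigma> K. ennreal (cmod (ip \<sigma> (K z) (K w)) powr ((2 - s + s) / 2)
      / (knorm \<sigma> K z powr s * knorm \<sigma> K w powr (2 - s)))
      = ennreal (Kabs z w / (c * Knorm w powr (2 - s)))"
    using AE_lam_domain by eventually_elim (simp add: z kernel_eq_ip Kabs_def Knorm_def c_def)
  then have "(\<integral>\<^sup>+ w. ennreal (cmod (ip \<sigma> (K z) (K w)) powr ((2 - s + s) / 2)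
      / (knorm \<sigma> K z powr s * knorm \<sigma> K w powr (2 - s))) \<partial>lam \<sigma> K)
      = (\<integral>\<^sup>+ w. ennreal (Kabs z w / (c * Knorm w powr (2 - s))) \<partial>lam \<sigma> K)"
    by (rule nn_integral_cong_AE)
  also have "\<dots> = (\<integral>\<^sup>+ w. ennreal ((Knorm w)\<^sup>2) * ennreal (Kabs z w / (c * Knorm w powr (2 - s))) \<partial>\<sigma>)"
    unfolding lam_eq_density by (rule nn_integral_density) measurable
  also have "\<dots> = (\<integral>\<^sup>+ w. ennreal (1 / c) * ennreal (Kabs z w * Knorm w powr s) \<partial>\<sigma>)"
  proof (rule nn_integral_cong)
    fix w
    have "(Knorm w)\<^sup>2 * (Kabs z w / (c * Knorm w powr (2 - s))) = 1 / c * (Kabs z w * Knorm w powr s)"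
      using Knorm_pos[of w] c by (simp add: powr_diff field_simps)
    then show "ennreal ((Knorm w)\<^sup>2) * ennreal (Kabs z w / (c * Knorm w powr (2 - s)))
        = ennreal (1 / c) * ennreal (Kabs z w * Knorm w powr s)"
      using c by (simp add: ennreal_mult[symmetric] Kabs_def)
  qed
  also have "\<dots> = ennreal (1 / c) * (\<integral>\<^sup>+ w. ennreal (Kabs z w * Knorm w powr s) \<partial>\<sigma>)"
    by (rule nn_integral_cmult) measurable
  finally show ?thesis unfolding c_def .
qed

lemma Kabs_test_function:
  assumes s: "0 < s" and admissible: "\<kappa> = 0 \<and> s = 1 \<or> 0 < \<kappa> \<and> s < \<kappa> \<and> \<kappa> < 2 - s"
  shows "\<exists>C>0. \<forall>z\<in>\<Omega>. (\<integral>\<^sup>+ w. ennreal (Kabs z w * Knorm w powr s) \<partial>\<sigma>) \<le> ennreal (C * Knorm z powr s)"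
proof -
  obtain M where M: "\<And>z. z \<in> \<Omega> \<Longrightarrow> (\<integral>\<^sup>+ w. ennreal (cmod (ip \<sigma> (K z) (K w)) powr ((2 - s + s) / 2)
      / (knorm \<sigma> K z powr s * knorm \<sigma> K w powr (2 - s))) \<partial>lam \<sigma> K) \<le> ennreal M"
    using Rudin_Forelli_complementary[OF s admissible] by blast
  have "(\<integral>\<^sup>+ w. ennreal (Kabs z w * Knorm w powr s) \<partial>\<sigma>) \<le> ennreal (max M 1 * Knorm z powr s)"
    if z: "z \<in> \<Omega>" for z
  proof -
    define c where "c = Knorm z powr s"
    have c: "c > 0" using Knorm_pos[of z] by (simp add: c_def)
    have "ennreal (1 / c) * (\<integral>\<^sup>+ w. ennreal (Kabs z w * Knorm w powr s) \<partial>\<sigma>) \<le> ennreal (max M 1)"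
      using M[OF z] unfolding Rudin_Forelli_integral_eq[OF z] c_def[symmetric]
      by (rule order.trans) simp
    then have "ennreal c * (ennreal (1 / c) * (\<integral>\<^sup>+ w. ennreal (Kabs z w * Knorm w powr s) \<partial>\<sigma>))
        \<le> ennreal c * ennreal (max M 1)"
      by (rule mult_left_mono) simp
    then show ?thesis
      using c by (simp add: ennreal_mult[symmetric] mult.assoc[symmetric] mult.commute c_def)
  qed
  then show ?thesis by (intro exI[of _ "max M 1"]) simp
qed

lemma Pop_bound:
  assumes z: "z \<in> \<Omega>"
  shows "ennreal (cmod (Pop \<sigma> K f z)) \<le> (\<integral>\<^sup>+ w. ennreal (Kabs z w * cmod (f w)) \<partial>\<sigma>)"
proof (cases "integrable \<sigma> (\<lambda>w. ip \<sigma> (K w) (K z) * f w)")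
  case True
  have "AE w in \<sigma>. ennreal (norm (ip \<sigma> (K w) (K z) * f w)) = ennreal (Kabs z w * cmod (f w))"
    using AE_domain
    by eventually_elim (simp add: z kernel_eq_ip norm_mult Kabs_def kernel_cnj[OF z])
  with integral_norm_bound_ennreal[OF True] show ?thesis
    unfolding Pop_def by (simp add: nn_integral_cong_AE)
next
  case False
  then show ?thesis by (simp add: Pop_def not_integrable_integral_eq)
qed

lemma P_bounded_Lp_Schur:
  fixes u v :: "complex ^ 'n \<Rightarrow> real"
  assumes p: "p \<ge> 1"
    and u_meas [measurable]: "u \<in> borel_measurable \<sigma>" and v_meas [measurable]: "v \<in> borel_measurable \<sigma>"
    and u: "\<And>z. u z \<ge> 0" and v: "\<And>z. v z > 0" and C: "C1 > 0" "C2 \<ge> 0"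
    and row: "\<And>z. z \<in> \<Omega> \<Longrightarrow> (\<integral>\<^sup>+ w. ennreal (Kabs z w * v w) \<partial>\<sigma>) \<le> ennreal (C1 * v z)"
    and column: "\<And>w. w \<in> \<Omega> \<Longrightarrow> (\<integral>\<^sup>+ z. ennreal (Kabs w z * v z powr (p - 1) * u z) \<partial>\<sigma>)
                    \<le> ennreal (C2 * v w powr (p - 1) * u w)"
  shows "P_bounded_Lp \<sigma> K (density \<sigma> u) p"
  unfolding P_bounded_Lp_def
proof (intro exI ballI)
  fix f :: "complex ^ 'n \<Rightarrow> complex" assume "f \<in> borel_measurable (density \<sigma> u)"
  then have [measurable]: "f \<in> borel_measurable \<sigma>"
    by (simp add: measurable_cong_sets[OF sets_density refl])
  show "(\<integral>\<^sup>+ z. ennreal (cmod (Pop \<sigma> K f z) powr p) \<partial>density \<sigma> u)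
      \<le> ennreal (C1 powr (p - 1) * C2) * (\<integral>\<^sup>+ w. ennreal (cmod (f w) powr p) \<partial>density \<sigma> u)"
  proof (rule Schur_test_nn_integral[OF sigma_finite_measure_axioms p C Kabs_measurable u_meas v_meas])
    show "(\<lambda>w. cmod (f w)) \<in> borel_measurable \<sigma>" by measurable
    show "AE z in \<sigma>. (\<integral>\<^sup>+ w. ennreal (Kabs z w * v w) \<partial>\<sigma>) \<le> ennreal (C1 * v z)"
      using AE_domain by eventually_elim (rule row)
    show "AE w in \<sigma>. (\<integral>\<^sup>+ z. ennreal (Kabs z w * v z powr (p - 1) * u z) \<partial>\<sigma>)
        \<le> ennreal (C2 * v w powr (p - 1) * u w)"
      using AE_domain
    proof eventually_elim
      case (elim w)
      have "(\<integral>\<^sup>+ z. ennreal (Kabs z w * v z powr (p - 1) * u z) \<partial>\<sigma>)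
          = (\<integral>\<^sup>+ z. ennreal (Kabs w z * v z powr (p - 1) * u z) \<partial>\<sigma>)"
        by (intro nn_integral_cong) (subst Kabs_commute, rule refl)
      with column[OF elim] show ?case by simp
    qed
    show "AE z in \<sigma>. ennreal (cmod (Pop \<sigma> K f z)) \<le> (\<integral>\<^sup>+ w. ennreal (Kabs z w * cmod (f w)) \<partial>\<sigma>)"
      using AE_domain by eventually_elim (rule Pop_bound)
  qed (simp_all add: Kabs_def u v)
qed

lemma P_bounded_Lp_weighted:
  assumes "\<kappa> = 0" and p: "1 \<le> p"
  shows "P_bounded_Lp \<sigma> K (wmeas \<sigma> K p) p"
proof -
  obtain C where C: "C > 0"
    and row: "\<And>z. z \<in> \<Omega> \<Longrightarrow> (\<integral>\<^sup>+ w. ennreal (Kabs z w * Knorm w) \<partial>\<sigma>) \<le> ennreal (C * Knorm z)"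
    using Kabs_test_function[of 1] assms Knorm_pos by (auto simp: less_imp_le)
  have Knorm_powr: "Knorm z powr (p - 1) * Knorm z powr (2 - p) = Knorm z" for z
    using Knorm_pos[of z] by (simp add: powr_add[symmetric])
  show ?thesis
    unfolding wmeas_eq_density
  proof (rule P_bounded_Lp_Schur[OF p _ Knorm_measurable _ Knorm_pos C less_imp_le[OF C] row])
    show "(\<lambda>z. Knorm z powr (2 - p)) \<in> borel_measurable \<sigma>" by measurable
    show "(\<integral>\<^sup>+ z. ennreal (Kabs w z * Knorm z powr (p - 1) * Knorm z powr (2 - p)) \<partial>\<sigma>)
        \<le> ennreal (C * Knorm w powr (p - 1) * Knorm w powr (2 - p))" if "w \<in> \<Omega>" for w
      using row[OF that] by (simp add: mult.assoc Knorm_powr)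
  qed simp_all
qed

lemma P_bounded_wsup:
  assumes "\<kappa> = 0"
  shows "P_bounded_wsup \<Omega> \<sigma> K"
proof -
  obtain C where C: "C > 0"
    and row: "\<And>z. z \<in> \<Omega> \<Longrightarrow> (\<integral>\<^sup>+ w. ennreal (Kabs z w * Knorm w) \<partial>\<sigma>) \<le> ennreal (C * Knorm z)"
    using Kabs_test_function[of 1] assms Knorm_pos by (auto simp: less_imp_le)
  show ?thesis
    unfolding P_bounded_wsup_def
  proof (intro exI ballI SUP_least)
    fix f z assume z: "z \<in> \<Omega>"
    define S where "S = (SUP w\<in>\<Omega>. ennreal (cmod (f w) / knorm \<sigma> K w))"
    have "AE w in \<sigma>. ennreal (Kabs z w * cmod (f w)) \<le> ennreal (Kabs z w * Knorm w) * S"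
      using AE_domain
    proof eventually_elim
      case (elim w)
      have "ennreal (Kabs z w * cmod (f w)) = ennreal (Kabs z w * Knorm w) * ennreal (cmod (f w) / knorm \<sigma> K w)"
        using Knorm_pos[of w] elim by (simp add: Kabs_def Knorm_def ennreal_mult[symmetric])
      also have "\<dots> \<le> ennreal (Kabs z w * Knorm w) * S"
        unfolding S_def using elim by (intro mult_left_mono SUP_upper) simp_all
      finally show ?case .
    qed
    then have "ennreal (cmod (Pop \<sigma> K f z)) \<le> (\<integral>\<^sup>+ w. ennreal (Kabs z w * Knorm w) * S \<partial>\<sigma>)"
      by (intro order.trans[OF Pop_bound[OF z]] nn_integral_mono_AE)
    also have "\<dots> = (\<integral>\<^sup>+ w. ennreal (Kabs z w * Knorm w) \<partial>\<sigma>) * S"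
      by (rule nn_integral_multc) measurable
    also have "\<dots> \<le> ennreal (C * Knorm z) * S"
      by (intro mult_right_mono row[OF z]) simp
    finally have "ennreal (cmod (Pop \<sigma> K f z)) * ennreal (1 / Knorm z) \<le> ennreal (C * Knorm z) * S * ennreal (1 / Knorm z)"
      by (rule mult_right_mono) simp
    then show "ennreal (cmod (Pop \<sigma> K f z) / knorm \<sigma> K z) \<le> ennreal C * S"
      using C Knorm_pos[of z] z
      by (simp add: Knorm_def ennreal_mult[symmetric] divide_inverse mult_ac)
  qed
qed

lemma P_bounded_Lp_unweighted:
  assumes "\<kappa> > 0" and p: "1 < p"
  shows "P_bounded_Lp \<sigma> K \<sigma> p"
proof -
  obtain s where s: "0 < s" "s < \<kappa>" "\<kappa> < 2 - s"
    and s': "0 < s * (p - 1)" "s * (p - 1) < \<kappa>" "\<kappa> < 2 - s * (p - 1)"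
    using Schur_exponent_exists[OF assms(1) kappa_less_2 p] by blast
  obtain C1 where C1: "C1 > 0"
    and row: "\<And>z. z \<in> \<Omega> \<Longrightarrow> (\<integral>\<^sup>+ w. ennreal (Kabs z w * Knorm w powr s) \<partial>\<sigma>) \<le> ennreal (C1 * Knorm z powr s)"
    using Kabs_test_function[of s] s by auto
  obtain C2 where C2: "C2 > 0"
    and row': "\<And>z. z \<in> \<Omega> \<Longrightarrow> (\<integral>\<^sup>+ w. ennreal (Kabs z w * Knorm w powr (s * (p - 1))) \<partial>\<sigma>)
                  \<le> ennreal (C2 * Knorm z powr (s * (p - 1)))"
    using Kabs_test_function[of "s * (p - 1)"] s' by auto
  have "P_bounded_Lp \<sigma> K (density \<sigma> (\<lambda>_. ennreal 1)) p"
  proof (rule P_bounded_Lp_Schur[OF less_imp_le[OF p] _ _ _ _ C1 less_imp_le[OF C2] row])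
    show "(\<integral>\<^sup>+ z. ennreal (Kabs w z * (Knorm z powr s) powr (p - 1) * 1) \<partial>\<sigma>)
        \<le> ennreal (C2 * (Knorm w powr s) powr (p - 1) * 1)" if "w \<in> \<Omega>" for w
      using row'[OF that] by (simp add: powr_powr)
    show "(\<lambda>w. Knorm w powr s) \<in> borel_measurable \<sigma>" by measurable
    show "0 < Knorm z powr s" for z using Knorm_pos[of z] by simp
  qed simp_all
  then show ?thesis by (simp add: density_1)
qed

end

theorem lemma2p8:
  fixes \<Omega> :: "(complex ^ 'n) set"
    and \<phi> :: "complex ^ 'n \<Rightarrow> complex ^ 'n \<Rightarrow> complex ^ 'n"
    and d :: "complex ^ 'n \<Rightarrow> complex ^ 'n \<Rightarrow> real"
    and \<sigma> :: "(complex ^ 'n) measure"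
    and K :: "complex ^ 'n \<Rightarrow> complex ^ 'n \<Rightarrow> complex"
    and \<kappa> :: real
  assumes "bergman_type \<Omega> \<phi> d \<sigma> K \<kappa>"
  shows "(\<kappa> = 0 \<longrightarrow> (\<forall>p::real. 1 \<le> p \<longrightarrow> P_bounded_Lp \<sigma> K (wmeas \<sigma> K p) p)
                      \<and> P_bounded_wsup \<Omega> \<sigma> K)
       \<and> (\<kappa> > 0 \<longrightarrow> (\<forall>p::real. 1 < p \<longrightarrow> P_bounded_Lp \<sigma> K \<sigma> p))"
proof -
  interpret bergman_type_space \<Omega> \<phi> d \<sigma> K \<kappa>
    by (rule bergman_type_space.intro[OF assms])
  show ?thesis
    using P_bounded_Lp_weighted P_bounded_wsup P_bounded_Lp_unweighted by blast
qed

end
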